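(* Let $K_{w,F}$ be an allowed folded ribbon unknot whose knot diagram $K$ is a nondegenerate triangle (a 3-stick unknot) and such that the folds at all three vertices are of the same type. Then $\frac{w}{2}\le r_{in}$, where $r_{in}$ is the inradius of the triangle $K$.
   Context: For an oriented polygonal knot diagram $K$ with vertices $v_1,v_2,v_3$ and edges $e_i=[v_i,v_{i+1}]$ (indices mod 3), the fold angle $\theta_i\in[0,\pi]$ at $v_i$ is the angle between $e_{i-1}$ and $e_i$. The folded ribbon $K_w$ of width $w$ is built by placing at each $v_i$ a fold line of length $w/\cos(\theta_i/2)$ centered at $v_i$ perpendicular to the bisector of $\theta_i$, and joining ends of consecutive fold lines by boundary segments parallel to and at distance $w/2$ from $K$ (so the ribbon along each edge is the strip of points within distance $w/2$ of the edge's line, bounded by the fold lines). Folding information $F$ records at each vertex whether the ribbon of $e_i$ lies over (overfold) or under (underfold) the ribbon of $e_{i-1}$; the folds are of the same type if all are overfolds or all are underfolds. $K_{w,F}$ is allowed if the ribbon is immersed away from the fold lines and admits a choice of crossing information (a continuous, antisymmetric, transitive $\pm1$-valued function on pairs of distinct points of the ribbon with the same image in the plane, recording which lies over which) agreeing with $F$. *)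

theory Defs
  imports "HOL-Analysis.Analysis"
begin

text \<open>A triangle knot diagram is given by vertices v 0, v 1, v 2 in the plane (complex numbers);
  edge e_i = [v i, v (nxt i)], indices modulo 3.\<close>

definition nxt :: "nat \<Rightarrow> nat" where "nxt i = (i + 1) mod 3"
definition prv :: "nat \<Rightarrow> nat" where "prv i = (i + 2) mod 3"

definition unitv :: "complex \<Rightarrow> complex" where "unitv z = scaleR (1 / norm z) z"

definition fold_angle :: "(nat \<Rightarrow> complex) \<Rightarrow> nat \<Rightarrow> real" where
  "fold_angle v i = arccos (inner (unitv (v (prv i) - v i)) (unitv (v (nxt i) - v i)))"

definition bisector :: "(nat \<Rightarrow> complex) \<Rightarrow> nat \<Rightarrow> complex" where
  "bisector v i = unitv (v (prv i) - v i) + unitv (v (nxt i) - v i)"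

definition fold_end :: "(nat \<Rightarrow> complex) \<Rightarrow> real \<Rightarrow> nat \<Rightarrow> real \<Rightarrow> complex" where
  "fold_end v w i s = v i + scaleR (s * w / (2 * cos (fold_angle v i / 2))) (unitv (\<i> * bisector v i))"

definition fold_line :: "(nat \<Rightarrow> complex) \<Rightarrow> real \<Rightarrow> nat \<Rightarrow> complex set" where
  "fold_line v w i = closed_segment (fold_end v w i 1) (fold_end v w i (-1))"

definition edge_line :: "(nat \<Rightarrow> complex) \<Rightarrow> nat \<Rightarrow> complex set" where
  "edge_line v i = {v i + scaleR t (v (nxt i) - v i) | t. True}"

text \<open>The ribbon piece along edge e_i: points within distance w/2 of the line of e_i,
  lying between the fold line at v i (on the side of v (nxt i)) and the fold line at
  v (nxt i) (on the side of v i).  The fold lines are perpendicular to the bisectors,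
  so these sides are the half-planes below.\<close>
definition piece :: "(nat \<Rightarrow> complex) \<Rightarrow> real \<Rightarrow> nat \<Rightarrow> complex set" where
  "piece v w i = {p. infdist p (edge_line v i) \<le> w / 2
                    \<and> inner (p - v i) (bisector v i) \<ge> 0
                    \<and> inner (p - v (nxt i)) (bisector v (nxt i)) \<ge> 0}"

text \<open>Points of the abstract ribbon are pairs (i, p) with i < 3 and p in piece i; (i,p) and
  (nxt i, p) are identified when p lies on the common fold line at v (nxt i).\<close>
definition same_pt :: "(nat \<Rightarrow> complex) \<Rightarrow> real \<Rightarrow> nat \<times> complex \<Rightarrow> nat \<times> complex \<Rightarrow> bool" where
  "same_pt v w x y \<longleftrightarrow> snd x = snd y \<and>
     (fst x = fst y
      \<or> (fst y = nxt (fst x) \<and> snd x \<in> fold_line v w (fst y))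
      \<or> (fst x = nxt (fst y) \<and> snd x \<in> fold_line v w (fst x)))"

definition dbl :: "(nat \<Rightarrow> complex) \<Rightarrow> real \<Rightarrow> nat \<Rightarrow> nat \<Rightarrow> complex set" where
  "dbl v w i j = {p. p \<in> piece v w i \<and> p \<in> piece v w j \<and> \<not> same_pt v w (i, p) (j, p)}"

text \<open>Immersion away from the fold lines: consecutive fold lines do not cross inside the strip.\<close>
definition immersed :: "(nat \<Rightarrow> complex) \<Rightarrow> real \<Rightarrow> bool" where
  "immersed v w \<longleftrightarrow> (\<forall>i<3.
     open_segment (fold_end v w i 1) (fold_end v w i (-1)) \<inter>
     open_segment (fold_end v w (nxt i) 1) (fold_end v w (nxt i) (-1)) = {})"

text \<open>Crossing information: c i j p = 1 means the ribbon point (i,p) lies over (j,p).\<close>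
definition crossing_info :: "(nat \<Rightarrow> complex) \<Rightarrow> real \<Rightarrow> (nat \<Rightarrow> nat \<Rightarrow> complex \<Rightarrow> real) \<Rightarrow> bool" where
  "crossing_info v w c \<longleftrightarrow>
     (\<forall>i<3. \<forall>j<3. \<forall>p\<in>dbl v w i j. c i j p = 1 \<or> c i j p = -1)
   \<and> (\<forall>i<3. \<forall>j<3. \<forall>p\<in>dbl v w i j. c j i p = - c i j p)
   \<and> (\<forall>i<3. \<forall>j<3. \<forall>k<3. \<forall>p. p \<in> dbl v w i j \<and> p \<in> dbl v w j k \<and> p \<in> dbl v w i k
          \<longrightarrow> c i j p = 1 \<longrightarrow> c j k p = 1 \<longrightarrow> c i k p = 1)
   \<and> (\<forall>i<3. \<forall>i'<3. \<forall>j<3. \<forall>p. p \<in> dbl v w i j \<and> p \<in> dbl v w i' j \<and> same_pt v w (i, p) (i', p)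
          \<longrightarrow> c i j p = c i' j p)
   \<and> (\<forall>i<3. \<forall>j<3. continuous_on (dbl v w i j) (c i j))"

text \<open>Agreement with folding information F: F i = True means the ribbon of e_i lies over the
  ribbon of e_(i-1) at v i (overfold), False means underfold.\<close>
definition agrees :: "(nat \<Rightarrow> complex) \<Rightarrow> real \<Rightarrow> (nat \<Rightarrow> bool) \<Rightarrow> (nat \<Rightarrow> nat \<Rightarrow> complex \<Rightarrow> real) \<Rightarrow> bool" where
  "agrees v w F c \<longleftrightarrow> (\<forall>i<3. \<exists>\<epsilon>>0. \<forall>p\<in>dbl v w (prv i) i.
       infdist p (fold_line v w i) < \<epsilon> \<longrightarrow> c i (prv i) p = (if F i then 1 else -1))"

definition allowed :: "(nat \<Rightarrow> complex) \<Rightarrow> real \<Rightarrow> (nat \<Rightarrow> bool) \<Rightarrow> bool" where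
  "allowed v w F \<longleftrightarrow> w > 0 \<and> immersed v w \<and> (\<exists>c. crossing_info v w c \<and> agrees v w F c)"

definition inradius :: "complex \<Rightarrow> complex \<Rightarrow> complex \<Rightarrow> real" where
  "inradius a b c = Sup {r. \<exists>z. cball z r \<subseteq> convex hull {a, b, c}}"

end

theory Submission
  imports Defs
begin

text \<open>If \<open>w/2\<close> exceeded the inradius, the incenter \<open>I\<close> would lie within \<open>w/2\<close> of all three
  edge lines and strictly inside the angle at each vertex, hence in all three ribbon pieces and on no
  fold line: a triple point of the ribbon. The segment from a vertex \<open>v k\<close> to \<open>I\<close> stays in the
  double-point set of the two pieces meeting at \<open>v k\<close>, so by continuity the crossing information of
  these two pieces at \<open>I\<close> is the one prescribed by the fold at \<open>v k\<close>. When all folds have the same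
  type this says that, at \<open>I\<close>, \<open>e\<^sub>1\<close> lies over \<open>e\<^sub>0\<close>, \<open>e\<^sub>2\<close> over \<open>e\<^sub>1\<close> and \<open>e\<^sub>0\<close> over
  \<open>e\<^sub>2\<close> (or all reversed), which contradicts transitivity.\<close>

section \<open>Planar cross product\<close>

definition cross :: "complex \<Rightarrow> complex \<Rightarrow> real" where
  "cross x y = Re x * Im y - Im x * Re y"

lemma cross_antisym: "cross x y = - cross y x"
  by (simp add: cross_def)

lemma cross_scaleR_left: "cross (r *\<^sub>R x) y = r * cross x y"
  by (simp add: cross_def algebra_simps)

lemma cross_add_scaleR_right: "cross x (a *\<^sub>R x + b *\<^sub>R y) = b * cross x y"
  by (simp add: cross_def algebra_simps)

lemma cross_rotate: "cross (C - B) (A - B) = cross (B - A) (C - A)"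
  by (simp add: cross_def algebra_simps)

lemma cross_sq_add_inner_sq: "(cross x y)\<^sup>2 + (inner x y)\<^sup>2 = (norm x)\<^sup>2 * (norm y)\<^sup>2"
  unfolding cross_def inner_complex_def cmod_power2 by (simp add: power2_eq_square algebra_simps)

lemma abs_cross_le: "\<bar>cross x y\<bar> \<le> norm x * norm y"
proof -
  have "(cross x y)\<^sup>2 \<le> (norm x * norm y)\<^sup>2"
    unfolding power_mult_distrib using cross_sq_add_inner_sq[of x y] zero_le_power2[of "inner x y"]
    by linarith
  hence "\<bar>cross x y\<bar> \<le> \<bar>norm x * norm y\<bar>" by (simp only: abs_le_square_iff)
  thus ?thesis by simp
qed

lemma abs_inner_less_if_cross_nonzero:
  assumes "cross x y \<noteq> 0"
  shows "\<bar>inner x y\<bar> < norm x * norm y"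
proof -
  have "(inner x y)\<^sup>2 < (norm x * norm y)\<^sup>2"
    unfolding power_mult_distrib using cross_sq_add_inner_sq[of x y] assms
    by (smt (verit) zero_less_power2)
  hence "\<not> \<bar>norm x * norm y\<bar> \<le> \<bar>inner x y\<bar>" by (simp only: abs_le_square_iff not_le)
  thus ?thesis by simp
qed

lemma collinear_iff_cross_eq_0: "collinear {A, B, C} \<longleftrightarrow> cross (B - A) (C - A) = 0"
proof -
  have "collinear {A, B, C} \<longleftrightarrow> collinear {0, B - A, C - A}"
    using collinear_3[of B A C] by (simp add: NO_MATCH_def insert_commute)
  also have "\<dots> \<longleftrightarrow> Im ((C - A) / (B - A)) = 0"
    by (simp add: collinear_iff_Reals complex_is_Real_iff)
  also have "\<dots> \<longleftrightarrow> cross (B - A) (C - A) = 0"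
    by (auto simp: Im_divide cross_def algebra_simps)
  finally show ?thesis .
qed

lemma inner_unitv: "inner x (unitv y) = inner x y / norm y"
  by (simp add: unitv_def)

lemma inner_unitv_self: "inner x (unitv x) = norm x"
  by (simp add: unitv_def dot_square_norm power2_eq_square)

lemma inner_bisector_nonneg: "0 \<le> inner x (unitv x + unitv y)"
proof (cases "y = 0")
  case False
  have "- (norm x * norm y) \<le> inner x y" using Cauchy_Schwarz_ineq2[of x y] by linarith
  hence "- norm x \<le> inner x y / norm y" using False by (simp add: field_simps)
  thus ?thesis by (simp add: inner_add_right inner_unitv_self inner_unitv)
qed (simp add: unitv_def)

lemma inner_bisector_pos:
  assumes "cross x y \<noteq> 0"
  shows "0 < inner x (unitv x + unitv y)"
proof -
  have "y \<noteq> 0" using assms by (auto simp: cross_def)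
  have "- (norm x * norm y) < inner x y" using abs_inner_less_if_cross_nonzero[OF assms] by linarith
  hence "- norm x < inner x y / norm y" using \<open>y \<noteq> 0\<close> by (simp add: field_simps)
  thus ?thesis by (simp add: inner_add_right inner_unitv_self inner_unitv)
qed

lemma inner_bisector_cone_nonneg:
  "0 \<le> \<alpha> \<Longrightarrow> 0 \<le> \<beta> \<Longrightarrow> 0 \<le> inner (\<alpha> *\<^sub>R x + \<beta> *\<^sub>R y) (unitv x + unitv y)"
  using inner_bisector_nonneg[of x y] inner_bisector_nonneg[of y x]
  by (simp add: inner_add_left add.commute)

lemma inner_bisector_cone_pos:
  assumes "cross x y \<noteq> 0" "0 < \<alpha>" "0 < \<beta>"
  shows "0 < inner (\<alpha> *\<^sub>R x + \<beta> *\<^sub>R y) (unitv x + unitv y)"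
proof -
  have "cross y x \<noteq> 0" using assms(1) cross_antisym[of x y] by simp
  thus ?thesis
    using inner_bisector_pos[OF assms(1)] inner_bisector_pos[of y x] assms(2,3)
    by (simp add: inner_add_left add.commute add_pos_pos)
qed

section \<open>Incenter and incircle\<close>

definition perimeter :: "complex \<Rightarrow> complex \<Rightarrow> complex \<Rightarrow> real" where
  "perimeter A B C = norm (B - C) + norm (C - A) + norm (A - B)"

text \<open>The incenter has barycentric weights proportional to the opposite side lengths, and since
  \<open>\<bar>cross (B - A) (C - A)\<bar>\<close> is twice the area, \<open>incircle_radius\<close> is the classical
  \<open>2 \<cdot> area / perimeter\<close>.\<close>

definition incenter :: "complex \<Rightarrow> complex \<Rightarrow> complex \<Rightarrow> complex" where
  "incenter A B C = (1 / perimeter A B C) *\<^sub>R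
     (norm (B - C) *\<^sub>R A + norm (C - A) *\<^sub>R B + norm (A - B) *\<^sub>R C)"

definition incircle_radius :: "complex \<Rightarrow> complex \<Rightarrow> complex \<Rightarrow> real" where
  "incircle_radius A B C = \<bar>cross (B - A) (C - A)\<bar> / perimeter A B C"

lemma perimeter_rotate: "perimeter B C A = perimeter A B C"
  by (simp add: perimeter_def algebra_simps)

lemma incenter_rotate: "incenter B C A = incenter A B C"
  by (simp add: incenter_def perimeter_rotate algebra_simps)

lemma incircle_radius_rotate: "incircle_radius B C A = incircle_radius A B C"
  by (simp add: incircle_radius_def perimeter_rotate cross_rotate)

lemma perimeter_pos: "A \<noteq> B \<Longrightarrow> 0 < perimeter A B C"
  unfolding perimeter_def by (simp add: add_nonneg_pos)

lemma incircle_radius_nonneg: "0 \<le> incircle_radius A B C"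
  by (simp add: incircle_radius_def perimeter_def)

lemma incenter_minus_vertex:
  assumes "perimeter A B C \<noteq> 0"
  shows "incenter A B C - A = (norm (A - B) / perimeter A B C) *\<^sub>R (C - A)
                              + (norm (C - A) / perimeter A B C) *\<^sub>R (B - A)"
  using assms unfolding incenter_def
  by (simp add: scaleR_conv_of_real field_simps complex_eq_iff) (simp add: perimeter_def algebra_simps)

lemma incenter_bisector_pos:
  assumes "\<not> collinear {A, B, C}"
  shows "0 < inner (incenter A B C - A) (unitv (C - A) + unitv (B - A))"
proof -
  have cross: "cross (C - A) (B - A) \<noteq> 0"
    using assms cross_antisym[of "C - A"] by (simp add: collinear_iff_cross_eq_0)
  hence "A \<noteq> B" "A \<noteq> C" by (auto simp: cross_def)
  hence P: "0 < perimeter A B C" by (simp add: perimeter_pos)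
  hence P0: "perimeter A B C \<noteq> 0" by simp
  show ?thesis
    unfolding incenter_minus_vertex[OF P0]
    using \<open>A \<noteq> B\<close> \<open>A \<noteq> C\<close> P by (intro inner_bisector_cone_pos[OF cross]) simp_all
qed

lemma hull_bisector_nonneg:
  assumes "p \<in> convex hull {A, B, C}"
  shows "0 \<le> inner (p - A) (unitv (C - A) + unitv (B - A))"
proof -
  obtain a b c where abc: "0 \<le> a" "0 \<le> b" "0 \<le> c" "a + b + c = 1"
    and p: "p = a *\<^sub>R A + b *\<^sub>R B + c *\<^sub>R C"
    using assms unfolding convex_hull_3 by blast
  have "p - A = c *\<^sub>R (C - A) + b *\<^sub>R (B - A)"
    using abc(4) unfolding p by (simp add: algebra_simps flip: scaleR_add_left)
  thus ?thesis using inner_bisector_cone_nonneg[OF abc(3,2)] by simp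
qed

lemma dist_line_foot:
  assumes "x \<noteq> 0"
  shows "dist z (A + (inner (z - A) x / (norm x)\<^sup>2) *\<^sub>R x) = \<bar>cross x (z - A)\<bar> / norm x"
proof -
  define u where "u = z - A"
  define t where "t = inner u x / (norm x)\<^sup>2"
  have "(norm (u - t *\<^sub>R x))\<^sup>2 = (norm u)\<^sup>2 - (inner u x)\<^sup>2 / (norm x)\<^sup>2"
    using assms unfolding t_def power2_norm_eq_inner
    by (simp add: inner_diff inner_commute power2_eq_square field_simps)
  also have "\<dots> = (cross x u / norm x)\<^sup>2"
    using assms cross_sq_add_inner_sq[of x u]
    by (simp add: field_simps inner_commute)
  finally have "norm (u - t *\<^sub>R x) = \<bar>cross x u\<bar> / norm x"
    by (metis abs_divide abs_norm_cancel real_sqrt_abs)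
  moreover have "dist z (A + t *\<^sub>R x) = norm (u - t *\<^sub>R x)"
    unfolding u_def dist_norm by (simp add: algebra_simps)
  ultimately show ?thesis unfolding t_def u_def by simp
qed

lemma incenter_dist_edge_line:
  assumes "\<not> collinear {A, B, C}"
  shows "\<exists>t. dist (incenter A B C) (A + t *\<^sub>R (B - A)) = incircle_radius A B C"
proof -
  have cross: "cross (B - A) (C - A) \<noteq> 0" using assms by (simp add: collinear_iff_cross_eq_0)
  hence "A \<noteq> B" by (auto simp: cross_def)
  hence P: "0 < perimeter A B C" by (rule perimeter_pos)
  hence P0: "perimeter A B C \<noteq> 0" by simp
  have "cross (B - A) (incenter A B C - A) = norm (A - B) / perimeter A B C * cross (B - A) (C - A)"
    unfolding incenter_minus_vertex[OF P0] add.commute[of "_ *\<^sub>R (C - A)"]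
    by (rule cross_add_scaleR_right)
  hence "\<bar>cross (B - A) (incenter A B C - A)\<bar> / norm (B - A) = incircle_radius A B C"
    using \<open>A \<noteq> B\<close> P by (simp add: incircle_radius_def abs_mult norm_minus_commute)
  moreover have "B - A \<noteq> 0" using \<open>A \<noteq> B\<close> by simp
  note dist_line_foot[OF this, of "incenter A B C" A]
  ultimately show ?thesis by (intro exI) (rule trans)
qed

lemma cross_barycentric:
  "cross (B - A) (C - A) *\<^sub>R z
     = cross (B - z) (C - z) *\<^sub>R A + cross (C - z) (A - z) *\<^sub>R B + cross (A - z) (B - z) *\<^sub>R C"
  "cross (B - A) (C - A) = cross (B - z) (C - z) + cross (C - z) (A - z) + cross (A - z) (B - z)"
  unfolding cross_def complex_eq_iff by (simp_all add: algebra_simps)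

lemma mem_convex_hull_if_cross_signs:
  assumes d: "cross (B - A) (C - A) \<noteq> 0"
    and "0 \<le> cross (B - z) (C - z) * cross (B - A) (C - A)"
    and "0 \<le> cross (C - z) (A - z) * cross (B - A) (C - A)"
    and "0 \<le> cross (A - z) (B - z) * cross (B - A) (C - A)"
  shows "z \<in> convex hull {A, B, C}"
proof -
  let ?d = "cross (B - A) (C - A)"
  define a b c where "a = cross (B - z) (C - z) / ?d" and "b = cross (C - z) (A - z) / ?d"
    and "c = cross (A - z) (B - z) / ?d"
  have nonneg: "0 \<le> x / ?d" if "0 \<le> x * ?d" for x
    using that d by (auto simp: zero_le_mult_iff zero_le_divide_iff)
  have "z = (1 / ?d) *\<^sub>R (?d *\<^sub>R z)" using d by simp
  also have "\<dots> = a *\<^sub>R A + b *\<^sub>R B + c *\<^sub>R C"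
    unfolding cross_barycentric(1)[of B A C z] a_def b_def c_def by (simp add: scaleR_add_right)
  finally have z: "z = a *\<^sub>R A + b *\<^sub>R B + c *\<^sub>R C" .
  have "a + b + c = 1"
    using d cross_barycentric(2)[of B A C z] unfolding a_def b_def c_def
    by (simp add: add_divide_distrib[symmetric])
  moreover have "0 \<le> a" "0 \<le> b" "0 \<le> c"
    unfolding a_def b_def c_def using assms(2-4) by (simp_all add: nonneg)
  ultimately show ?thesis unfolding convex_hull_3 using z by blast
qed

lemma cross_weighted_shift:
  "(a + b + c) * cross (B - z) (C - z)
     = a * cross (B - A) (C - A) - cross ((a + b + c) *\<^sub>R z - (a *\<^sub>R A + b *\<^sub>R B + c *\<^sub>R C)) (C - B)"
  by (simp add: cross_def algebra_simps)

text \<open>At \<open>z\<close> = incenter, \<open>cross (B - z) (C - z)\<close> is \<open>norm (B - C) / perimeter A B C\<close> times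
  \<open>cross (B - A) (C - A)\<close>; moving \<open>z\<close> by at most the incircle radius changes it by at most
  \<open>norm (B - C)\<close> times that radius, which is exactly its absolute value, so the sign cannot flip.\<close>

lemma cross_sign_near_incenter:
  assumes d: "cross (B - A) (C - A) \<noteq> 0" and z: "dist z (incenter A B C) \<le> incircle_radius A B C"
  shows "0 \<le> cross (B - z) (C - z) * cross (B - A) (C - A)"
proof -
  define a d P where "a = norm (B - C)" and "d = cross (B - A) (C - A)" and "P = perimeter A B C"
  define e where "e = cross (z - incenter A B C) (C - B)"
  have "A \<noteq> B" using d by (auto simp: cross_def)
  hence P: "0 < P" unfolding P_def by (rule perimeter_pos)
  have sum: "a + norm (C - A) + norm (A - B) = P" by (simp add: a_def P_def perimeter_def)
  have "P *\<^sub>R incenter A B C = a *\<^sub>R A + norm (C - A) *\<^sub>R B + norm (A - B) *\<^sub>R C"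
    using P unfolding incenter_def a_def P_def by simp
  hence shift: "P *\<^sub>R z - (a *\<^sub>R A + norm (C - A) *\<^sub>R B + norm (A - B) *\<^sub>R C)
                = P *\<^sub>R (z - incenter A B C)"
    by (simp add: scaleR_diff_right)
  have key: "P * cross (B - z) (C - z) = a * d - P * e"
    using cross_weighted_shift[of a "norm (C - A)" "norm (A - B)" B z C A]
    unfolding sum shift cross_scaleR_left d_def e_def .
  have "\<bar>e\<bar> \<le> norm (z - incenter A B C) * a"
    unfolding e_def a_def using abs_cross_le by (metis norm_minus_commute)
  also have "\<dots> \<le> \<bar>d\<bar> / P * a"
    using z by (intro mult_right_mono) (simp_all add: dist_norm incircle_radius_def a_def d_def P_def)
  finally have "P * \<bar>e\<bar> \<le> a * \<bar>d\<bar>" using P by (simp add: field_simps)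
  hence "P * \<bar>e\<bar> * \<bar>d\<bar> \<le> a * \<bar>d\<bar> * \<bar>d\<bar>" by (simp add: mult_right_mono)
  hence "P * \<bar>e * d\<bar> \<le> a * (d * d)" by (simp add: abs_mult mult.assoc)
  moreover have "P * (e * d) \<le> P * \<bar>e * d\<bar>" using P by (simp add: mult_left_mono)
  moreover have "P * (cross (B - z) (C - z) * d) = (a * d - P * e) * d"
    by (simp only: key[symmetric] mult.assoc)
  ultimately have "0 \<le> P * (cross (B - z) (C - z) * d)" by (simp add: algebra_simps)
  thus ?thesis using P unfolding d_def by (simp add: zero_le_mult_iff)
qed

lemma cball_incenter_subset_hull:
  assumes "\<not> collinear {A, B, C}"
  shows "cball (incenter A B C) (incircle_radius A B C) \<subseteq> convex hull {A, B, C}"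
proof
  fix z assume "z \<in> cball (incenter A B C) (incircle_radius A B C)"
  hence z: "dist z (incenter A B C) \<le> incircle_radius A B C" by (simp add: dist_commute)
  have d: "cross (B - A) (C - A) \<noteq> 0" using assms by (simp add: collinear_iff_cross_eq_0)
  have d': "cross (C - B) (A - B) = cross (B - A) (C - A)" "cross (A - C) (B - C) = cross (B - A) (C - A)"
    using cross_rotate[of C B A] cross_rotate[of A C B] by simp_all
  show "z \<in> convex hull {A, B, C}"
  proof (rule mem_convex_hull_if_cross_signs[OF d])
    show "0 \<le> cross (B - z) (C - z) * cross (B - A) (C - A)"
      using cross_sign_near_incenter[OF d z] .
    show "0 \<le> cross (C - z) (A - z) * cross (B - A) (C - A)"
      using cross_sign_near_incenter[of C B A z] d d' z
      by (simp add: incenter_rotate incircle_radius_rotate)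
    show "0 \<le> cross (A - z) (B - z) * cross (B - A) (C - A)"
      using cross_sign_near_incenter[of A C B z] d d' z
      by (simp add: incenter_rotate incircle_radius_rotate)
  qed
qed

lemma le_inradius:
  assumes "cball z \<rho> \<subseteq> convex hull {A, B, C}"
  shows "\<rho> \<le> inradius A B C"
proof -
  have bounded: "bounded (convex hull {A, B, C})" by (simp add: finite_imp_bounded_convex_hull)
  have "r \<le> diameter (convex hull {A, B, C})" if "cball y r \<subseteq> convex hull {A, B, C}" for y r
    using diameter_subset[OF that bounded] diameter_ge_0[OF bounded]
    by (smt (verit) diameter_cball)
  hence "bdd_above {r. \<exists>y. cball y r \<subseteq> convex hull {A, B, C}}"
    by (intro bdd_aboveI[where M = "diameter (convex hull {A, B, C})"]) blast
  thus ?thesis unfolding inradius_def using assms by (auto intro: cSup_upper)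
qed

section \<open>The ribbon of a triangle\<close>

lemma less_3_cases: "k < 3 \<Longrightarrow> k = 0 \<or> k = 1 \<or> k = (2::nat)"
  by auto

lemma less_3_induct: "k < 3 \<Longrightarrow> P 0 \<Longrightarrow> P 1 \<Longrightarrow> P 2 \<Longrightarrow> P (k::nat)"
  using less_3_cases by blast

lemma nxt_values: "nxt 0 = 1" "nxt 1 = 2" "nxt 2 = 0"
  and prv_values: "prv 0 = 2" "prv 1 = 0" "prv 2 = 1"
  by (simp_all add: nxt_def prv_def)

lemma
  assumes "k < 3"
  shows nxt_prv: "nxt (prv k) = k" and prv_nxt: "prv (nxt k) = k" and prv_prv: "prv (prv k) = nxt k"
    and prv_neq: "prv k \<noteq> k" and prv_neq_nxt: "prv k \<noteq> nxt k"
  using assms by (rule less_3_induct; simp only: nxt_values prv_values; simp)+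

lemma nxt_less: "nxt k < 3" and prv_less: "prv k < 3"
  by (simp_all add: nxt_def prv_def)

lemma triangle_rotation:
  assumes "k < 3"
  shows "{v k, v (nxt k), v (prv k)} = {v 0, v 1, v 2}"
    and "incenter (v k) (v (nxt k)) (v (prv k)) = incenter (v 0) (v 1) (v 2)"
    and "incircle_radius (v k) (v (nxt k)) (v (prv k)) = incircle_radius (v 0) (v 1) (v 2)"
proof -
  have rot: "incenter (v 1) (v 2) (v 0) = incenter (v 0) (v 1) (v 2)"
    "incenter (v 2) (v 0) (v 1) = incenter (v 0) (v 1) (v 2)"
    "incircle_radius (v 1) (v 2) (v 0) = incircle_radius (v 0) (v 1) (v 2)"
    "incircle_radius (v 2) (v 0) (v 1) = incircle_radius (v 0) (v 1) (v 2)"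
    using incenter_rotate[of "v 0" "v 1" "v 2"] incenter_rotate[of "v 2" "v 0" "v 1"]
      incircle_radius_rotate[of "v 0" "v 1" "v 2"] incircle_radius_rotate[of "v 2" "v 0" "v 1"]
    by simp_all
  show "{v k, v (nxt k), v (prv k)} = {v 0, v 1, v 2}"
    using assms by (rule less_3_induct) (simp only: nxt_values prv_values; blast)+
  show "incenter (v k) (v (nxt k)) (v (prv k)) = incenter (v 0) (v 1) (v 2)"
    using assms by (rule less_3_induct) (simp_all only: nxt_values prv_values rot)
  show "incircle_radius (v k) (v (nxt k)) (v (prv k)) = incircle_radius (v 0) (v 1) (v 2)"
    using assms by (rule less_3_induct) (simp_all only: nxt_values prv_values rot)
qed

lemma dbl_commute: "dbl v w i j = dbl v w j i"
  unfolding dbl_def same_pt_def by auto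

lemma fold_line_orthogonal:
  assumes "p \<in> fold_line v w k"
  shows "inner (p - v k) (bisector v k) = 0"
proof -
  have orth: "inner (fold_end v w k s - v k) (bisector v k) = 0" for s
    by (simp add: fold_end_def unitv_def inner_complex_def)
  obtain u where "p = (1 - u) *\<^sub>R fold_end v w k 1 + u *\<^sub>R fold_end v w k (-1)"
    using assms unfolding fold_line_def closed_segment_def by blast
  hence "p - v k = (1 - u) *\<^sub>R (fold_end v w k 1 - v k) + u *\<^sub>R (fold_end v w k (-1) - v k)"
    by (simp add: algebra_simps)
  thus ?thesis by (simp add: inner_add_left orth)
qed

lemma vertex_mem_fold_line: "v k \<in> fold_line v w k"
proof -
  have "midpoint (fold_end v w k 1) (fold_end v w k (-1)) = v k"
    by (simp add: midpoint_def fold_end_def scaleR_conv_of_real algebra_simps)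
  thus ?thesis unfolding fold_line_def by (metis midpoint_in_closed_segment)
qed

lemma vertex_mem_edge_line: "v k \<in> edge_line v k" "v (nxt k) \<in> edge_line v k"
proof -
  have "v k = v k + 0 *\<^sub>R (v (nxt k) - v k)" "v (nxt k) = v k + 1 *\<^sub>R (v (nxt k) - v k)" by simp_all
  thus "v k \<in> edge_line v k" "v (nxt k) \<in> edge_line v k" unfolding edge_line_def by blast+
qed

lemma infdist_edge_line_segment:
  assumes "a \<in> edge_line v j" "q \<in> edge_line v j" "0 \<le> t" "t \<le> 1"
  shows "infdist (a + t *\<^sub>R (p - a)) (edge_line v j) \<le> dist p q"
proof -
  obtain s1 s2 where a: "a = v j + s1 *\<^sub>R (v (nxt j) - v j)" and q: "q = v j + s2 *\<^sub>R (v (nxt j) - v j)"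
    using assms(1,2) unfolding edge_line_def by blast
  have "a + t *\<^sub>R (q - a) = v j + (s1 + t * (s2 - s1)) *\<^sub>R (v (nxt j) - v j)"
    unfolding a q by (simp add: algebra_simps)
  hence on_line: "a + t *\<^sub>R (q - a) \<in> edge_line v j" unfolding edge_line_def by blast
  have "dist (a + t *\<^sub>R (p - a)) (a + t *\<^sub>R (q - a)) = t * dist p q"
    using assms(3) by (simp add: dist_norm algebra_simps flip: scaleR_diff_right)
  also have "\<dots> \<le> dist p q" using assms(3,4) by (simp add: mult_left_le_one_le)
  finally show ?thesis by (rule infdist_le2[OF on_line])
qed

lemma incenter_near_edge_line:
  assumes "\<not> collinear {v 0, v 1, v 2}" "k < 3"
  shows "\<exists>q\<in>edge_line v k. dist (incenter (v 0) (v 1) (v 2)) q = incircle_radius (v 0) (v 1) (v 2)"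
proof -
  note rot = triangle_rotation[OF assms(2), of v]
  have "\<not> collinear {v k, v (nxt k), v (prv k)}" using assms(1) unfolding rot(1) .
  from incenter_dist_edge_line[OF this] show ?thesis
    unfolding rot(2,3) edge_line_def by blast
qed

lemma incenter_bisector_side:
  assumes "\<not> collinear {v 0, v 1, v 2}" "k < 3"
  shows "0 < inner (incenter (v 0) (v 1) (v 2) - v k) (bisector v k)"
proof -
  note rot = triangle_rotation[OF assms(2), of v]
  have "\<not> collinear {v k, v (nxt k), v (prv k)}" using assms(1) unfolding rot(1) .
  from incenter_bisector_pos[OF this] show ?thesis
    unfolding rot(2) bisector_def .
qed

lemma hull_bisector_side:
  assumes "p \<in> convex hull {v 0, v 1, v 2}" "k < 3"
  shows "0 \<le> inner (p - v k) (bisector v k)"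
  using hull_bisector_nonneg[of p "v k" "v (nxt k)" "v (prv k)"] assms
  unfolding triangle_rotation[OF assms(2)] bisector_def by blast

lemma mem_piece:
  assumes "k < 3" "p \<in> convex hull {v 0, v 1, v 2}" "infdist p (edge_line v k) \<le> w / 2"
  shows "p \<in> piece v w k"
  using assms hull_bisector_side[OF assms(2)] nxt_less unfolding piece_def by blast

lemma mem_dbl_prv:
  assumes "k < 3" "p \<in> piece v w (prv k)" "p \<in> piece v w k" "p \<notin> fold_line v w k"
  shows "p \<in> dbl v w (prv k) k"
  using assms nxt_prv[OF assms(1)] prv_neq[OF assms(1)] prv_neq_nxt[OF assms(1)]
  unfolding dbl_def same_pt_def by auto

lemma segment_to_incenter_in_dbl:
  assumes ncol: "\<not> collinear {v 0, v 1, v 2}" and r: "incircle_radius (v 0) (v 1) (v 2) \<le> w / 2"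
    and k: "k < 3" and t: "0 < t" "t \<le> 1"
  shows "v k + t *\<^sub>R (incenter (v 0) (v 1) (v 2) - v k) \<in> dbl v w (prv k) k"
proof -
  define I where "I = incenter (v 0) (v 1) (v 2)"
  define p where "p = v k + t *\<^sub>R (I - v k)"
  have "I \<in> convex hull {v 0, v 1, v 2}"
    using cball_incenter_subset_hull[OF ncol] incircle_radius_nonneg unfolding I_def by auto
  moreover have "v k \<in> convex hull {v 0, v 1, v 2}"
    using k hull_subset[of "{v 0, v 1, v 2}" convex] by (auto dest: less_3_cases)
  ultimately have hull: "p \<in> convex hull {v 0, v 1, v 2}"
    using convexD_alt[OF convex_convex_hull, of "v k" _ I t] t unfolding p_def
    by (simp add: algebra_simps)
  have near: "infdist p (edge_line v j) \<le> w / 2" if "j < 3" "v k \<in> edge_line v j" for j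
  proof -
    obtain q where "q \<in> edge_line v j" "dist I q = incircle_radius (v 0) (v 1) (v 2)"
      using incenter_near_edge_line[OF ncol \<open>j < 3\<close>] unfolding I_def by blast
    thus ?thesis
      using infdist_edge_line_segment[OF \<open>v k \<in> edge_line v j\<close>, of q t I] t r unfolding p_def by simp
  qed
  have "v k \<in> edge_line v (prv k)"
    using vertex_mem_edge_line(2)[of v "prv k"] nxt_prv[OF k] by simp
  hence "p \<in> piece v w (prv k)" using mem_piece[OF prv_less hull] near prv_less by blast
  moreover have "p \<in> piece v w k" using mem_piece[OF k hull] near[OF k vertex_mem_edge_line(1)] .
  moreover have "inner (p - v k) (bisector v k) \<noteq> 0"
    using incenter_bisector_side[OF ncol k] t unfolding p_def I_def by simp
  hence "p \<notin> fold_line v w k" using fold_line_orthogonal by blast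
  ultimately show ?thesis using mem_dbl_prv[OF k] unfolding p_def I_def by blast
qed

section \<open>Crossing information at a triple point\<close>

lemma
  assumes c: "crossing_info v w c" and ij: "i < 3" "j < 3"
  shows crossing_info_sign: "p \<in> dbl v w i j \<Longrightarrow> c i j p = 1 \<or> c i j p = -1"
    and crossing_info_antisym: "p \<in> dbl v w i j \<Longrightarrow> c j i p = - c i j p"
    and crossing_info_trans: "k < 3 \<Longrightarrow> p \<in> dbl v w i j \<Longrightarrow> p \<in> dbl v w j k \<Longrightarrow> p \<in> dbl v w i k
           \<Longrightarrow> c i j p = 1 \<Longrightarrow> c j k p = 1 \<Longrightarrow> c i k p = 1"
    and crossing_info_continuous: "continuous_on (dbl v w i j) (c i j)"
proof -
  note c = c[unfolded crossing_info_def]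
  show "p \<in> dbl v w i j \<Longrightarrow> c i j p = 1 \<or> c i j p = -1"
    using c[THEN conjunct1] ij by blast
  show "p \<in> dbl v w i j \<Longrightarrow> c j i p = - c i j p"
    using c[THEN conjunct2, THEN conjunct1] ij by blast
  show "k < 3 \<Longrightarrow> p \<in> dbl v w i j \<Longrightarrow> p \<in> dbl v w j k \<Longrightarrow> p \<in> dbl v w i k
           \<Longrightarrow> c i j p = 1 \<Longrightarrow> c j k p = 1 \<Longrightarrow> c i k p = 1"
    using c[THEN conjunct2, THEN conjunct2, THEN conjunct1] ij by blast
  show "continuous_on (dbl v w i j) (c i j)"
    using c[THEN conjunct2, THEN conjunct2, THEN conjunct2, THEN conjunct2] ij by blast
qed

lemma segment_point_near:
  fixes a q :: "'a::real_normed_vector"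
  assumes "a \<in> L" "0 < \<epsilon>"
  shows "\<exists>t\<in>{0<..<1}. infdist (a + t *\<^sub>R (q - a)) L < \<epsilon>"
proof -
  have "((\<lambda>t. a + t *\<^sub>R (q - a)) \<longlongrightarrow> a + 0 *\<^sub>R (q - a)) (at_right 0)"
    by (intro tendsto_intros)
  hence "((\<lambda>t. infdist (a + t *\<^sub>R (q - a)) L) \<longlongrightarrow> infdist a L) (at_right 0)"
    by (simp add: tendsto_infdist)
  hence "\<forall>\<^sub>F t in at_right 0. infdist (a + t *\<^sub>R (q - a)) L < \<epsilon>"
    using assms by (simp add: order_tendstoD(2))
  moreover have "\<forall>\<^sub>F t in at_right 0. t \<in> {0<..<1::real}" by (rule eventually_at_right_real) simp
  ultimately have "\<exists>t. infdist (a + t *\<^sub>R (q - a)) L < \<epsilon> \<and> t \<in> {0<..<1}"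
    by (intro eventually_happens'[OF _ eventually_conj]) simp_all
  thus ?thesis by blast
qed

lemma crossing_sign_near_vertex:
  assumes ci: "crossing_info v w c" and ag: "agrees v w F c" and k: "k < 3"
    and seg: "\<And>t. 0 < t \<Longrightarrow> t \<le> 1 \<Longrightarrow> v k + t *\<^sub>R (q - v k) \<in> dbl v w (prv k) k"
  shows "c k (prv k) q = (if F k then 1 else -1)"
proof -
  define P where "P t = v k + t *\<^sub>R (q - v k)" for t
  define S where "S = P ` {0<..1}"
  have S: "S \<subseteq> dbl v w k (prv k)" using seg dbl_commute unfolding S_def P_def by auto
  have "connected S"
    unfolding S_def P_def by (intro connected_continuous_image continuous_intros) simp
  moreover have "continuous_on S (c k (prv k))"
    using crossing_info_continuous[OF ci k prv_less] S continuous_on_subset by blast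
  moreover have "c k (prv k) ` S \<subseteq> {1, -1}"
    using crossing_info_sign[OF ci k prv_less] S by blast
  hence "finite (c k (prv k) ` S)" by (rule finite_subset) simp
  ultimately have const: "c k (prv k) constant_on S"
    by (rule continuous_finite_range_constant)
  obtain \<epsilon> where "0 < \<epsilon>" and \<epsilon>: "\<forall>p\<in>dbl v w (prv k) k. infdist p (fold_line v w k) < \<epsilon>
           \<longrightarrow> c k (prv k) p = (if F k then 1 else -1)"
    using ag k unfolding agrees_def by blast
  obtain t where t: "t \<in> {0<..<1}" "infdist (P t) (fold_line v w k) < \<epsilon>"
    using segment_point_near[OF vertex_mem_fold_line \<open>0 < \<epsilon>\<close>] unfolding P_def by blast
  hence "c k (prv k) (P t) = (if F k then 1 else -1)" using \<epsilon> seg unfolding P_def by simp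
  moreover have "P t \<in> S" "P 1 \<in> S" using t unfolding S_def by auto
  moreover have "P 1 = q" unfolding P_def by simp
  ultimately show ?thesis using const unfolding constant_on_def by metis
qed

lemma crossing_info_no_cyclic_triple:
  assumes ci: "crossing_info v w c"
    and dbl: "\<And>k. k < 3 \<Longrightarrow> q \<in> dbl v w (prv k) k"
    and sign: "\<And>k. k < 3 \<Longrightarrow> c k (prv k) q = s"
  shows False
proof -
  obtain k :: nat where "k < 3" by (meson zero_less_numeral)
  hence k: "k < 3" "prv k < 3" "nxt k < 3" by (simp_all add: prv_less nxt_less)
  have d: "q \<in> dbl v w k (prv k)" "q \<in> dbl v w (prv k) (nxt k)" "q \<in> dbl v w k (nxt k)"
    using dbl[OF k(1)] dbl[OF k(2)] dbl[OF k(3)] dbl_commute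
    unfolding prv_prv[OF k(1)] prv_nxt[OF k(1)] by blast+
  have s: "c k (prv k) q = s" "c (prv k) (nxt k) q = s" "c (nxt k) k q = s"
    using sign[OF k(1)] sign[OF k(2)] sign[OF k(3)] unfolding prv_prv[OF k(1)] prv_nxt[OF k(1)] .
  have "s = 1 \<or> s = -1" using crossing_info_sign[OF ci k(1,2) d(1)] s(1) by simp
  thus False
  proof
    assume "s = 1"
    hence "c k (nxt k) q = 1"
      using crossing_info_trans[OF ci k(1,2) k(3) d] s by simp
    thus False using crossing_info_antisym[OF ci k(1,3) d(3)] s(3) \<open>s = 1\<close> by simp
  next
    assume "s = -1"
    have "c (prv k) k q = 1" using crossing_info_antisym[OF ci k(1,2) d(1)] s(1) \<open>s = -1\<close> by simp
    moreover have "c k (nxt k) q = 1" using crossing_info_antisym[OF ci k(1,3) d(3)] s(3) \<open>s = -1\<close> by simp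
    moreover have "q \<in> dbl v w (prv k) k" using d(1) dbl_commute by blast
    ultimately have "c (prv k) (nxt k) q = 1" using crossing_info_trans[OF ci k(2,1,3)] d by blast
    thus False using s(2) \<open>s = -1\<close> by simp
  qed
qed

theorem theorem5p1:
  fixes v :: "nat \<Rightarrow> complex" and w :: real and F :: "nat \<Rightarrow> bool"
  assumes "\<not> collinear {v 0, v 1, v 2}"
    and "allowed v w F"
    and "F 0 = F 1" and "F 1 = F 2"
  shows "w / 2 \<le> inradius (v 0) (v 1) (v 2)"
proof (rule ccontr)
  assume "\<not> w / 2 \<le> inradius (v 0) (v 1) (v 2)"
  moreover have "incircle_radius (v 0) (v 1) (v 2) \<le> inradius (v 0) (v 1) (v 2)"
    using le_inradius[OF cball_incenter_subset_hull[OF assms(1)]] .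
  ultimately have r: "incircle_radius (v 0) (v 1) (v 2) \<le> w / 2" by linarith
  define I where "I = incenter (v 0) (v 1) (v 2)"
  obtain c where ci: "crossing_info v w c" and ag: "agrees v w F c"
    using assms(2) unfolding allowed_def by blast
  have seg: "v k + t *\<^sub>R (I - v k) \<in> dbl v w (prv k) k" if "k < 3" "0 < t" "t \<le> 1" for k t
    using segment_to_incenter_in_dbl[OF assms(1) r that] unfolding I_def .
  have same_fold: "F k = F 0" if "k < 3" for k
    using that by (rule less_3_induct) (simp_all only: assms(3,4))
  have "I \<in> dbl v w (prv k) k" if "k < 3" for k
    using seg[OF that, of 1] by simp
  moreover have "c k (prv k) I = (if F 0 then 1 else -1)" if "k < 3" for k
    using crossing_sign_near_vertex[OF ci ag that seg[OF that]] same_fold[OF that] by simp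
  ultimately show False by (rule crossing_info_no_cyclic_triple[OF ci])
qed

end
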